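(* For every $c>0$ there exists $c'>0$ such that for all $\phi\in X_G$ with $|\phi(t)|\le c$ for all $t\in[-r,0]$ and for all $t\in[-r,t_\phi)$ we have $|x^\phi(t)|\le c'$.
   Context: Constants $\beta,\mu,\gamma,a>0$. The function $g:\mathbb{R}\to(0,\infty)$ is continuously differentiable with $0<g_0:=\inf g(\mathbb{R})\le \sup g(\mathbb{R})=g_U<\infty$. The function $v:\mathbb{R}\to\mathbb{R}$ is continuously differentiable with $0<v_0\le v(x)\le v_U$ for all $x$. Fix $r>a/v_0$; $C=C([-r,0],\mathbb{R})$, $C^1=C^1([-r,0],\mathbb{R})$ with norm $|\phi|_1=\max|\phi|+\max|\phi'|$. For a function $x$ defined on an interval containing $[t-r,t]$, the segment $x_t\in C$ is $x_t(s)=x(t+s)$. For $\phi\in C$ let $\delta(\phi)$ be the unique $u\in(0,r)$ with $a=\int_{-u}^0 v(\phi(s))\,ds$. Define $G:C^1\to\mathbb{R}$ by $$G(\phi)=\beta e^{-\mu\delta(\phi)}\frac{v(\phi(0))}{v(\phi(-\delta(\phi)))}g(\phi(-\delta(\phi)))-\gamma\phi(0),$$ and $X_G=\{\phi\in C^1:\phi'(0)=G(\phi)\}$. Each $\phi\in X_G$ determines a unique maximal continuously differentiable solution $x^\phi:[-r,t_\phi)\to\mathbb{R}$, $0<t_\phi\le\infty$, of $x'(t)=G(x_t)$ for $0<t<t_\phi$, $x_0=\phi$ (every other such solution with $x_0=\phi$ is a restriction of $x^\phi$). *)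

theory Defs
  imports "HOL-Analysis.Analysis"
begin

text \<open>Elements of C = C([-r,0],R) are represented by functions real => real,
 of which only the restriction to [-r,0] matters.\<close>

definition in_C1 :: "real \<Rightarrow> (real \<Rightarrow> real) \<Rightarrow> bool" where
  "in_C1 r \<phi> \<longleftrightarrow> (\<exists>\<phi>'. continuous_on {-r..0} \<phi>' \<and>
      (\<forall>s\<in>{-r..0}. (\<phi> has_real_derivative \<phi>' s) (at s within {-r..0})))"

definition deriv0 :: "real \<Rightarrow> (real \<Rightarrow> real) \<Rightarrow> real" where
  "deriv0 r \<phi> = (THE d. (\<phi> has_real_derivative d) (at 0 within {-r..0}))"

definition delay :: "(real \<Rightarrow> real) \<Rightarrow> real \<Rightarrow> real \<Rightarrow> (real \<Rightarrow> real) \<Rightarrow> real" where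
  "delay v a r \<phi> = (THE u. u \<in> {0<..<r} \<and> integral {-u..0} (\<lambda>s. v (\<phi> s)) = a)"

definition Gfun :: "real \<Rightarrow> real \<Rightarrow> real \<Rightarrow> real \<Rightarrow> real \<Rightarrow> (real \<Rightarrow> real) \<Rightarrow> (real \<Rightarrow> real)
    \<Rightarrow> (real \<Rightarrow> real) \<Rightarrow> real" where
  "Gfun \<beta> \<mu> \<gamma> a r g v \<phi> =
     (let d = delay v a r \<phi> in
       \<beta> * exp (- \<mu> * d) * (v (\<phi> 0) / v (\<phi> (- d))) * g (\<phi> (- d)) - \<gamma> * \<phi> 0)"

definition X_G :: "real \<Rightarrow> real \<Rightarrow> real \<Rightarrow> real \<Rightarrow> real \<Rightarrow> (real \<Rightarrow> real) \<Rightarrow> (real \<Rightarrow> real)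
    \<Rightarrow> (real \<Rightarrow> real) set" where
  "X_G \<beta> \<mu> \<gamma> a r g v = {\<phi>. in_C1 r \<phi> \<and> deriv0 r \<phi> = Gfun \<beta> \<mu> \<gamma> a r g v \<phi>}"

definition seg :: "(real \<Rightarrow> real) \<Rightarrow> real \<Rightarrow> (real \<Rightarrow> real)" where
  "seg x t = (\<lambda>s. x (t + s))"

definition is_solution :: "real \<Rightarrow> real \<Rightarrow> real \<Rightarrow> real \<Rightarrow> real \<Rightarrow> (real \<Rightarrow> real) \<Rightarrow> (real \<Rightarrow> real)
    \<Rightarrow> (real \<Rightarrow> real) \<Rightarrow> real \<Rightarrow> (real \<Rightarrow> real) \<Rightarrow> bool" where
  "is_solution \<beta> \<mu> \<gamma> a r g v \<phi> T x \<longleftrightarrow> 0 < T \<and>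
     (\<exists>x'. continuous_on {-r..<T} x' \<and>
        (\<forall>t\<in>{-r..<T}. (x has_real_derivative x' t) (at t within {-r..<T})) \<and>
        (\<forall>t\<in>{0<..<T}. x' t = Gfun \<beta> \<mu> \<gamma> a r g v (seg x t))) \<and>
     (\<forall>s\<in>{-r..0}. seg x 0 s = \<phi> s)"

end

theory Submission
  imports Defs
begin

text \<open>Write \<open>G(\<phi>) = B(\<phi>) - \<gamma> \<phi>(0)\<close>. Since \<open>v \<ge> v\<^sub>0\<close>, the delay \<open>\<delta>(\<phi>)\<close> is well defined in \<open>(0, r)\<close>,
  and then the birth term \<open>B(\<phi>)\<close> lies between \<open>0\<close> and \<open>K = \<beta> (v\<^sub>U / v\<^sub>0) sup g\<close>, whatever \<open>\<phi>\<close> is.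
  A solution therefore satisfies \<open>0 \<le> x' + \<gamma> x \<le> K\<close> for \<open>t > 0\<close>, and comparison with constant
  solutions yields \<open>-c \<le> x \<le> max c (K / \<gamma>)\<close>.\<close>

lemma integral_ge_const_mult_length:
  fixes f :: "real \<Rightarrow> real"
  assumes "continuous_on {p..q} f" "\<And>s. s \<in> {p..q} \<Longrightarrow> m \<le> f s" "p \<le> q"
  shows "m * (q - p) \<le> integral {p..q} f"
proof -
  have "integral {p..q} (\<lambda>_. m) \<le> integral {p..q} f"
    by (rule integral_le) (auto intro: integrable_continuous_interval assms)
  then show ?thesis using assms(3) by (simp add: mult.commute)
qed

lemma integral_upto_0_strict_mono:
  fixes f :: "real \<Rightarrow> real"
  assumes "continuous_on {-r..0} f" "0 < m" "\<And>s. s \<in> {-r..0} \<Longrightarrow> m \<le> f s"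
    and "0 \<le> u1" "u1 < u2" "u2 \<le> r"
  shows "integral {-u1..0} f < integral {-u2..0} f"
proof -
  have cont: "continuous_on {p..q} f" if "-r \<le> p" "q \<le> 0" for p q
    using continuous_on_subset[OF assms(1)] that by auto
  have "integral {-u2..0} f = integral {-u2..-u1} f + integral {-u1..0} f"
    using Henstock_Kurzweil_Integration.integral_combine[of "-u2" "-u1" 0 f]
      integrable_continuous_interval[OF cont[of "-u2" 0]] assms by auto
  moreover have "m * (u2 - u1) \<le> integral {-u2..-u1} f"
    using integral_ge_const_mult_length[OF cont, of "-u2" "-u1"] assms by auto
  moreover have "0 < m * (u2 - u1)" using assms by simp
  ultimately show ?thesis by linarith
qed

text \<open>The map \<open>u \<mapsto> \<integral>\<^sub>-\<^sub>u\<^sup>0 f\<close> vanishes at \<open>0\<close>, exceeds \<open>m r > a\<close> at \<open>r\<close> and is strictly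
  increasing, so it attains the level \<open>a\<close> exactly once in \<open>(0, r)\<close>.\<close>

lemma integral_upto_0_level_unique:
  fixes f :: "real \<Rightarrow> real"
  assumes cont: "continuous_on {-r..0} f" and "0 < m" and lb: "\<And>s. s \<in> {-r..0} \<Longrightarrow> m \<le> f s"
    and "0 < a" "a < m * r"
  shows "\<exists>!u. u \<in> {0<..<r} \<and> integral {-u..0} f = a"
proof -
  have "0 < m * r" using assms by linarith
  then have "0 < r" using \<open>0 < m\<close> by (simp add: zero_less_mult_iff)
  have "continuous_on {-r..0} (\<lambda>w. integral {w..0} f)"
    by (rule indefinite_integral_continuous_1'[OF integrable_continuous_interval[OF cont]])
  moreover have "m * r \<le> integral {-r..0} f"
    using integral_ge_const_mult_length[OF cont lb] \<open>0 < r\<close> by simp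
  ultimately obtain w where w: "-r \<le> w" "w \<le> 0" "integral {w..0} f = a"
    using IVT2'[of "\<lambda>w. integral {w..0} f" 0 a "-r"] assms \<open>0 < r\<close> by auto
  moreover have "w \<noteq> 0" using w \<open>0 < a\<close> by auto
  moreover have "w \<noteq> -r" using w \<open>m * r \<le> integral {-r..0} f\<close> \<open>a < m * r\<close> by auto
  ultimately have "-w \<in> {0<..<r}" by auto
  show ?thesis
  proof (rule ex1I[of _ "-w"])
    fix u assume u: "u \<in> {0<..<r} \<and> integral {-u..0} f = a"
    show "u = -w"
    proof (rule ccontr)
      assume "u \<noteq> -w"
      then consider "u < -w" | "-w < u" by linarith
      then show False
        using integral_upto_0_strict_mono[OF cont \<open>0 < m\<close> lb, of u "-w"]
          integral_upto_0_strict_mono[OF cont \<open>0 < m\<close> lb, of "-w" u] u w \<open>-w \<in> {0<..<r}\<close>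
        by cases auto
    qed
  qed (use w \<open>-w \<in> {0<..<r}\<close> in auto)
qed

lemma delay_mem:
  fixes \<phi> v :: "real \<Rightarrow> real"
  assumes "continuous_on {-r..0} \<phi>" "continuous_on UNIV v" "0 < v0" "\<And>x. v0 \<le> v x"
    and "0 < a" "a / v0 < r"
  shows "delay v a r \<phi> \<in> {0<..<r}"
proof -
  have "a < v0 * r" using assms(3,6) by (simp add: pos_divide_less_eq mult.commute)
  then have "\<exists>!u. u \<in> {0<..<r} \<and> integral {-u..0} (\<lambda>s. v (\<phi> s)) = a"
    using integral_upto_0_level_unique[OF continuous_on_compose2[OF assms(2,1) subset_UNIV]
        assms(3) _ assms(5)] assms(4) by blast
  from theI'[OF this] show ?thesis unfolding delay_def by (rule conjunct1)
qed

lemma birth_term_bounds: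
  fixes \<beta> \<mu> d vp vq h :: real
  assumes "0 < \<beta>" "0 \<le> \<mu>" "0 \<le> d" "0 < v0" "v0 \<le> vp" "vp \<le> vU" "v0 \<le> vq" "0 < h" "h \<le> gU"
  shows "0 < \<beta> * exp (- \<mu> * d) * (vp / vq) * h"
    and "\<beta> * exp (- \<mu> * d) * (vp / vq) * h \<le> \<beta> * (vU / v0) * gU"
proof -
  have e: "0 < exp (- \<mu> * d)" "exp (- \<mu> * d) \<le> 1" using assms by auto
  have q: "0 < vp / vq" using assms by simp
  have q': "vp / vq \<le> vU / v0" by (rule frac_le) (use assms in linarith)+
  show "0 < \<beta> * exp (- \<mu> * d) * (vp / vq) * h" using assms e q by simp
  have "\<beta> * exp (- \<mu> * d) * (vp / vq) * h \<le> \<beta> * 1 * (vU / v0) * gU"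
    using assms e q q' by (intro mult_mono mult_nonneg_nonneg) simp_all
  then show "\<beta> * exp (- \<mu> * d) * (vp / vq) * h \<le> \<beta> * (vU / v0) * gU" by simp
qed

lemma Gfun_plus_decay_bounds:
  fixes \<phi> g v :: "real \<Rightarrow> real"
  assumes "continuous_on {-r..0} \<phi>" "0 < \<beta>" "0 \<le> \<mu>" "0 < a"
    and "continuous_on UNIV v" "0 < v0" "\<And>x. v0 \<le> v x" "\<And>x. v x \<le> vU" "a / v0 < r"
    and "\<And>x. 0 < g x" "\<And>x. g x \<le> gU"
  shows "0 \<le> Gfun \<beta> \<mu> \<gamma> a r g v \<phi> + \<gamma> * \<phi> 0"
    and "Gfun \<beta> \<mu> \<gamma> a r g v \<phi> + \<gamma> * \<phi> 0 \<le> \<beta> * (vU / v0) * gU"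
proof -
  define d where "d = delay v a r \<phi>"
  have "0 \<le> d" using delay_mem[OF assms(1,5,6,7,4,9)] unfolding d_def by simp
  note bounds = birth_term_bounds[OF assms(2,3) this assms(6,7,8,7,10,11)]
  have "Gfun \<beta> \<mu> \<gamma> a r g v \<phi> + \<gamma> * \<phi> 0
      = \<beta> * exp (- \<mu> * d) * (v (\<phi> 0) / v (\<phi> (- d))) * g (\<phi> (- d))"
    unfolding Gfun_def d_def Let_def by simp
  then show "0 \<le> Gfun \<beta> \<mu> \<gamma> a r g v \<phi> + \<gamma> * \<phi> 0"
    and "Gfun \<beta> \<mu> \<gamma> a r g v \<phi> + \<gamma> * \<phi> 0 \<le> \<beta> * (vU / v0) * gU"
    using bounds by (simp_all add: less_imp_le)
qed

text \<open>Comparison with the constant solution \<open>M\<close>: the function \<open>e\<^sup>\<gamma>\<^sup>s (y s - M)\<close> is non-increasing.\<close>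

lemma ode_barrier_upper:
  fixes y y' :: "real \<Rightarrow> real"
  assumes "0 \<le> t" "continuous_on {0..t} y"
    and "\<And>s. 0 < s \<Longrightarrow> s < t \<Longrightarrow> (y has_real_derivative y' s) (at s)"
    and "\<And>s. 0 < s \<Longrightarrow> s < t \<Longrightarrow> y' s \<le> \<gamma> * (M - y s)"
    and "y 0 \<le> M"
  shows "y t \<le> M"
proof -
  define z where "z = (\<lambda>s. exp (\<gamma> * s) * (y s - M))"
  have "z t \<le> z 0"
  proof (rule DERIV_nonpos_imp_decreasing_open[OF assms(1)])
    fix s assume s: "0 < s" "s < t"
    have "(z has_real_derivative exp (\<gamma> * s) * (\<gamma> * (y s - M) + y' s)) (at s)"
      unfolding z_def
      by (auto intro!: derivative_eq_intros assms(3) s simp: algebra_simps)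
    moreover have "\<gamma> * (y s - M) + y' s \<le> 0"
      using assms(4)[OF s] by (simp add: algebra_simps)
    then have "exp (\<gamma> * s) * (\<gamma> * (y s - M) + y' s) \<le> 0"
      by (simp add: mult_nonneg_nonpos)
    ultimately show "\<exists>y. (z has_real_derivative y) (at s) \<and> y \<le> 0" by blast
  qed (auto simp: z_def intro!: continuous_intros assms(2))
  then have "exp (\<gamma> * t) * (y t - M) \<le> 0" using assms(5) by (simp add: z_def)
  then show ?thesis by (simp add: mult_le_0_iff)
qed

lemma linear_decay_ode_bound:
  fixes x x' :: "real \<Rightarrow> real"
  assumes "0 < \<gamma>" "0 \<le> t" "continuous_on {0..t} x"
    and "\<And>s. 0 < s \<Longrightarrow> s < t \<Longrightarrow> (x has_real_derivative x' s) (at s)"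
    and "\<And>s. 0 < s \<Longrightarrow> s < t \<Longrightarrow> 0 \<le> x' s + \<gamma> * x s \<and> x' s + \<gamma> * x s \<le> K"
    and "\<bar>x 0\<bar> \<le> c"
  shows "\<bar>x t\<bar> \<le> max c (K / \<gamma>)"
proof -
  have "x t \<le> max c (K / \<gamma>)"
  proof (rule ode_barrier_upper[where \<gamma> = \<gamma>, OF assms(2,3,4)])
    fix s assume "0 < s" "s < t"
    have "K = \<gamma> * (K / \<gamma>)" using assms(1) by simp
    also have "\<dots> \<le> \<gamma> * max c (K / \<gamma>)" using assms(1) by (intro mult_left_mono) auto
    finally have "K \<le> \<gamma> * max c (K / \<gamma>)" .
    then show "x' s \<le> \<gamma> * (max c (K / \<gamma>) - x s)"
      using assms(5)[OF \<open>0 < s\<close> \<open>s < t\<close>] by (simp add: algebra_simps)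
  qed (use assms(6) in auto)
  moreover have "- x t \<le> c"
  proof (rule ode_barrier_upper[where \<gamma> = \<gamma> and y' = "\<lambda>s. - x' s", OF assms(2)])
    show "continuous_on {0..t} (\<lambda>s. - x s)" by (intro continuous_intros assms(3))
    fix s assume "0 < s" "s < t"
    show "((\<lambda>s. - x s) has_real_derivative - x' s) (at s)"
      by (rule DERIV_minus[OF assms(4)[OF \<open>0 < s\<close> \<open>s < t\<close>]])
    have "0 \<le> \<gamma> * c" using assms(1,6) by simp
    then show "- x' s \<le> \<gamma> * (c - - x s)"
      using assms(5)[OF \<open>0 < s\<close> \<open>s < t\<close>] by (simp add: algebra_simps)
  qed (use assms(6) in auto)
  ultimately show ?thesis by linarith
qed

lemma continuous_on_seg:
  assumes "continuous_on {-r..<T} x" "0 \<le> t" "t < T"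
  shows "continuous_on {-r..0} (seg x t)"
  unfolding seg_def
  by (rule continuous_on_compose2[OF assms(1), where f = "\<lambda>s. t + s"])
    (use assms(2,3) in \<open>auto intro!: continuous_intros\<close>)

lemma is_solutionE:
  assumes "is_solution \<beta> \<mu> \<gamma> a r g v \<phi> T x" "0 < r"
  obtains x' where "0 < T" "continuous_on {-r..<T} x" "\<And>s. s \<in> {-r..0} \<Longrightarrow> x s = \<phi> s"
    and "\<And>s. s \<in> {0<..<T} \<Longrightarrow> (x has_real_derivative x' s) (at s)"
    and "\<And>s. s \<in> {0<..<T} \<Longrightarrow> x' s = Gfun \<beta> \<mu> \<gamma> a r g v (seg x s)"
proof -
  obtain x' where T: "0 < T" and deriv: "\<And>s. s \<in> {-r..<T} \<Longrightarrow>
        (x has_real_derivative x' s) (at s within {-r..<T})"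
      and ode: "\<And>s. s \<in> {0<..<T} \<Longrightarrow> x' s = Gfun \<beta> \<mu> \<gamma> a r g v (seg x s)"
      and init: "\<forall>s\<in>{-r..0}. seg x 0 s = \<phi> s"
    using assms(1) unfolding is_solution_def by blast
  have cont: "continuous_on {-r..<T} x" by (rule DERIV_continuous_on[OF deriv])
  have deriv_at: "(x has_real_derivative x' s) (at s)" if "s \<in> {0<..<T}" for s
    using deriv[of s] that assms(2) at_within_interior[of s "{-r..<T}"] by auto
  show ?thesis by (rule that[OF T cont _ deriv_at ode]) (use init in \<open>simp_all add: seg_def\<close>)
qed

lemma is_solution_bounded:
  fixes \<phi> g v x :: "real \<Rightarrow> real"
  assumes "0 < \<beta>" "0 \<le> \<mu>" "0 < \<gamma>" "0 < a"
    and "continuous_on UNIV v" "0 < v0" "\<And>x. v0 \<le> v x" "\<And>x. v x \<le> vU" "a / v0 < r"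
    and "\<And>x. 0 < g x" "\<And>x. g x \<le> gU"
    and sol: "is_solution \<beta> \<mu> \<gamma> a r g v \<phi> T x" and \<phi>_le: "\<forall>s\<in>{-r..0}. \<bar>\<phi> s\<bar> \<le> c"
    and t: "t \<in> {-r..<T}"
  shows "\<bar>x t\<bar> \<le> max c (\<beta> * (vU / v0) * gU / \<gamma>)"
proof -
  have "0 < r" using assms(4,6,9) divide_pos_pos[of a v0] by linarith
  obtain x' where "0 < T" and x_cont: "continuous_on {-r..<T} x"
    and x_init: "\<And>s. s \<in> {-r..0} \<Longrightarrow> x s = \<phi> s"
    and x_deriv: "\<And>s. s \<in> {0<..<T} \<Longrightarrow> (x has_real_derivative x' s) (at s)"
    and x_ode: "\<And>s. s \<in> {0<..<T} \<Longrightarrow> x' s = Gfun \<beta> \<mu> \<gamma> a r g v (seg x s)"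
    using is_solutionE[OF sol \<open>0 < r\<close>] by blast
  have birth: "0 \<le> x' s + \<gamma> * x s \<and> x' s + \<gamma> * x s \<le> \<beta> * (vU / v0) * gU"
    if s: "s \<in> {0<..<T}" for s
  proof -
    have "continuous_on {-r..0} (seg x s)" by (rule continuous_on_seg[OF x_cont]) (use s in auto)
    note bounds = Gfun_plus_decay_bounds[OF this assms(1,2,4,5,6,7,8,9,10,11)]
    have "x' s + \<gamma> * x s = Gfun \<beta> \<mu> \<gamma> a r g v (seg x s) + \<gamma> * seg x s 0"
      by (simp add: x_ode[OF s] seg_def)
    then show ?thesis using bounds by simp
  qed
  show ?thesis
  proof (cases "t \<le> 0")
    case True
    then have "\<bar>\<phi> t\<bar> \<le> c" using t \<phi>_le by auto
    then show ?thesis using True t x_init[of t] by auto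
  next
    case False
    show ?thesis
    proof (rule linear_decay_ode_bound[OF assms(3), where x = x and x' = x' and t = t])
      show "0 \<le> t" using False by simp
      show "continuous_on {0..t} x"
        by (rule continuous_on_subset[OF x_cont]) (use t \<open>0 < r\<close> in auto)
      show "\<bar>x 0\<bar> \<le> c" using \<phi>_le x_init[of 0] \<open>0 < r\<close> by auto
      fix s assume "0 < s" "s < t"
      then have "s \<in> {0<..<T}" using t by auto
      then show "(x has_real_derivative x' s) (at s)"
        and "0 \<le> x' s + \<gamma> * x s \<and> x' s + \<gamma> * x s \<le> \<beta> * (vU / v0) * gU"
        by (rule x_deriv, rule birth)
    qed
  qed
qed

theorem proposition3p1:
  fixes \<beta> \<mu> \<gamma> a r v0 vU :: real and g v g' v' :: "real \<Rightarrow> real"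
  assumes "\<beta> > 0" "\<mu> > 0" "\<gamma> > 0" "a > 0"
    and "\<And>x. (g has_real_derivative g' x) (at x)" "continuous_on UNIV g'"
    and "\<And>x. g x > 0" "0 < Inf (range g)" "bdd_above (range g)"
    and "\<And>x. (v has_real_derivative v' x) (at x)" "continuous_on UNIV v'"
    and "0 < v0" "\<And>x. v0 \<le> v x" "\<And>x. v x \<le> vU"
    and "r > a / v0"
  shows "\<forall>c>0. \<exists>c'>0. \<forall>\<phi>\<in>X_G \<beta> \<mu> \<gamma> a r g v. (\<forall>t\<in>{-r..0}. \<bar>\<phi> t\<bar> \<le> c) \<longrightarrow>
           (\<forall>T x. is_solution \<beta> \<mu> \<gamma> a r g v \<phi> T x \<longrightarrow> (\<forall>t\<in>{-r..<T}. \<bar>x t\<bar> \<le> c'))"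
proof (intro allI impI)
  fix c :: real assume "c > 0"
  have v_cont: "continuous_on UNIV v"
    using assms(10) by (meson DERIV_isCont continuous_at_imp_continuous_on)
  have g_le: "g y \<le> Sup (range g)" for y by (rule cSup_upper) (use assms(9) in auto)
  note bound = is_solution_bounded[OF assms(1) less_imp_le[OF assms(2)] assms(3,4) v_cont
      assms(12,13,14,15,7) g_le]
  show "\<exists>c'>0. \<forall>\<phi>\<in>X_G \<beta> \<mu> \<gamma> a r g v. (\<forall>t\<in>{-r..0}. \<bar>\<phi> t\<bar> \<le> c) \<longrightarrow>
           (\<forall>T x. is_solution \<beta> \<mu> \<gamma> a r g v \<phi> T x \<longrightarrow> (\<forall>t\<in>{-r..<T}. \<bar>x t\<bar> \<le> c'))"
  proof (intro exI[of _ "max c (\<beta> * (vU / v0) * Sup (range g) / \<gamma>)"] conjI ballI impI allI)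
    show "0 < max c (\<beta> * (vU / v0) * Sup (range g) / \<gamma>)" using \<open>c > 0\<close> by simp
    fix \<phi> T x t
    assume "\<phi> \<in> X_G \<beta> \<mu> \<gamma> a r g v" and \<phi>_le: "\<forall>t\<in>{-r..0}. \<bar>\<phi> t\<bar> \<le> c"
      and sol: "is_solution \<beta> \<mu> \<gamma> a r g v \<phi> T x" and t: "t \<in> {-r..<T}"
    show "\<bar>x t\<bar> \<le> max c (\<beta> * (vU / v0) * Sup (range g) / \<gamma>)"
      by (rule bound[OF sol \<phi>_le t])
  qed
qed

end
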